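(* Let $d$ and $K$ be positive integers, and let $\mathcal P$ be a set consisting either of a single prime or of infinitely many primes. For $k=1,\ldots,K$ let $\{a_{k,n}\}_{n=1}^\infty$ and $\{b_{k,n}\}_{n=1}^\infty$ be sequences of non-zero integers such that $p\nmid\gcd(a_{k,n},b_{k,n})$ for all $p\in\mathcal P$, $k$ and $n$, and such that the partial sums $\alpha_{k,N}=\sum_{n=1}^N\frac{b_{k,n}}{a_{k,n}}$ converge as $N\to\infty$. Set $a_{0,n}=1$. Suppose that for each $k=1,\ldots,K$ and each $p\in\mathcal P$: for every $N\in\mathbb N$ there is exactly one $n\le N$ with $\nu_p(a_{k,n})=\max_{1\le m\le N}\nu_p(a_{k,m})$, and for all sufficiently large $N$, \[\max_{1\le n\le N}\nu_p(a_{k,n})>d\max_{1\le n\le N}\nu_p(a_{k-1,n}).\] If $\mathcal P=\{p\}$, assume additionally that for each $k=1,\ldots,K$, $\lim_{N\to\infty}\big(\max_{1\le n\le N}\nu_p(a_{k,n})-d\max_{1\le n\le N}\nu_p(a_{k-1,n})\big)=\infty$. Let $P\in\mathbb Z[x_1,\ldots,x_K]$ be a non-zero polynomial of degree at most $d$. Then $P(\alpha_{1,N},\ldots,\alpha_{K,N})\ne0$ for all sufficiently large $N$.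
   Context: $\nu_p$ denotes the $p$-adic valuation. *)

theory Defs
  imports "HOL-Analysis.Analysis" "HOL-Computational_Algebra.Primes"
begin

definition nu :: "nat \<Rightarrow> int \<Rightarrow> nat" where
  "nu p a = multiplicity (int p) a"

definition maxnu :: "nat \<Rightarrow> (nat \<Rightarrow> int) \<Rightarrow> nat \<Rightarrow> nat" where
  "maxnu p a N = Max {nu p (a n) | n. n \<in> {1..N}}"

definition psum :: "(nat \<Rightarrow> int) \<Rightarrow> (nat \<Rightarrow> int) \<Rightarrow> nat \<Rightarrow> real" where
  "psum a b N = (\<Sum>n=1..N. real_of_int (b n) / real_of_int (a n))"

text \<open>Polynomials in Z[x_1,...,x_K] of total degree at most d are represented by their
 coefficient function on exponent vectors e (e i = exponent of x_i); the admissible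
 exponent vectors are those supported on {1..K} with total degree at most d.\<close>
definition exps_deg_le :: "nat \<Rightarrow> nat \<Rightarrow> (nat \<Rightarrow> nat) set" where
  "exps_deg_le K d = {e. (\<forall>i. i \<notin> {1..K} \<longrightarrow> e i = 0) \<and> (\<Sum>i=1..K. e i) \<le> d}"

definition mpoly_eval :: "((nat \<Rightarrow> nat) \<Rightarrow> int) \<Rightarrow> nat \<Rightarrow> (nat \<Rightarrow> real) \<Rightarrow> real" where
  "mpoly_eval c K x = (\<Sum>e\<in>{e. c e \<noteq> 0}. real_of_int (c e) * (\<Prod>i=1..K. x i ^ e i))"

end

theory Submission
  imports Defs
begin

text \<open>
  Write M_k = max_{n \<le> N} \<nu>_p(a_{k,n}). Choose p \<in> \<P> such that for all large N the gaps
  M_k - d M_{k-1} exceed \<nu>_p of every coefficient of P: for a single prime this is the limit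
  hypothesis, for infinitely many primes take p dividing no coefficient. Since the maximal
  valuation of the denominators is attained only once, \<nu>_p(\<alpha>_{k,N}) = -M_k. A monomial c_e x^e
  then has valuation \<nu>_p(c_e) - \<Sum>_i e_i M_i, and the gaps make these valuations pairwise
  distinct: compare two exponent vectors at the largest index where they differ. Hence exactly
  one monomial has minimal valuation, so P(\<alpha>_{1,N}, ..., \<alpha>_{K,N}) \<noteq> 0.
\<close>

section \<open>Valuations of rational numbers\<close>

text \<open>For a rational \<open>x\<close>: \<open>\<nu>\<^sub>p(x) \<ge> v\<close>, resp. \<open>\<nu>\<^sub>p(x) = v\<close>. The condition \<open>\<not> p dvd w\<close> also excludes \<open>w = 0\<close>.\<close>

definition padic_val_ge :: "nat \<Rightarrow> int \<Rightarrow> real \<Rightarrow> bool" where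
  "padic_val_ge p v x \<longleftrightarrow>
     (\<exists>u w::int. \<not> int p dvd w \<and> x = of_int u / of_int w * real p powi v)"

definition has_padic_val :: "nat \<Rightarrow> int \<Rightarrow> real \<Rightarrow> bool" where
  "has_padic_val p v x \<longleftrightarrow>
     (\<exists>u w::int. \<not> int p dvd u \<and> \<not> int p dvd w \<and> x = of_int u / of_int w * real p powi v)"

lemma has_padic_val_imp_ge: "has_padic_val p v x \<Longrightarrow> padic_val_ge p v x"
  unfolding has_padic_val_def padic_val_ge_def by blast

lemma has_padic_val_nonzero:
  assumes "prime p" "has_padic_val p v x"
  shows "x \<noteq> 0"
  using assms prime_gt_0_nat[of p] unfolding has_padic_val_def by auto

lemma padic_val_ge_zero: "prime p \<Longrightarrow> padic_val_ge p v 0"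
  unfolding padic_val_ge_def by (rule exI[of _ 0], rule exI[of _ 1]) auto

lemma padic_val_ge_of_int: "prime p \<Longrightarrow> padic_val_ge p 0 (of_int b)"
  unfolding padic_val_ge_def by (rule exI[of _ b], rule exI[of _ 1]) auto

lemma padic_val_ge_mono:
  assumes "prime p" "padic_val_ge p v x" "v' \<le> v"
  shows "padic_val_ge p v' x"
proof -
  obtain u w where uw: "\<not> int p dvd w" "x = of_int u / of_int w * real p powi v"
    using assms(2) unfolding padic_val_ge_def by blast
  have "real p powi v = real p ^ nat (v - v') * real p powi v'"
    using assms(1,3) prime_gt_0_nat[of p]
    by (simp flip: power_int_add power_int_of_nat)
  then have "x = of_int (u * int p ^ nat (v - v')) / of_int w * real p powi v'"
    using uw(2) by simp
  then show ?thesis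
    unfolding padic_val_ge_def using uw(1) by blast
qed

lemma padic_val_ge_add:
  assumes "prime p" "padic_val_ge p v x" "padic_val_ge p v y"
  shows "padic_val_ge p v (x + y)"
proof -
  obtain u w where uw: "\<not> int p dvd w" "x = of_int u / of_int w * real p powi v"
    using assms(2) unfolding padic_val_ge_def by blast
  obtain u' w' where uw': "\<not> int p dvd w'" "y = of_int u' / of_int w' * real p powi v"
    using assms(3) unfolding padic_val_ge_def by blast
  have "w \<noteq> 0" "w' \<noteq> 0"
    using uw(1) uw'(1) by auto
  then have "x + y = of_int (u * w' + u' * w) / of_int (w * w') * real p powi v"
    using uw(2) uw'(2) by (simp add: field_simps)
  moreover have "\<not> int p dvd w * w'"
    using uw uw' assms(1) by (simp add: prime_dvd_mult_iff)
  ultimately show ?thesis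
    unfolding padic_val_ge_def by blast
qed

lemma padic_val_ge_sum:
  assumes "prime p" "\<And>i. i \<in> A \<Longrightarrow> padic_val_ge p v (f i)"
  shows "padic_val_ge p v (\<Sum>i\<in>A. f i)"
  using assms(2)
  by (induction A rule: infinite_finite_induct)
     (auto intro: padic_val_ge_add padic_val_ge_zero assms(1))

lemma padic_val_ge_mult:
  assumes "prime p" "padic_val_ge p v x" "padic_val_ge p v' y"
  shows "padic_val_ge p (v + v') (x * y)"
proof -
  obtain u w where uw: "\<not> int p dvd w" "x = of_int u / of_int w * real p powi v"
    using assms(2) unfolding padic_val_ge_def by blast
  obtain u' w' where uw': "\<not> int p dvd w'" "y = of_int u' / of_int w' * real p powi v'"
    using assms(3) unfolding padic_val_ge_def by blast
  have "x * y = of_int (u * u') / of_int (w * w') * real p powi (v + v')"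
    using uw uw' prime_gt_0_nat[OF assms(1)] by (simp add: power_int_add)
  moreover have "\<not> int p dvd w * w'"
    using uw uw' assms(1) by (simp add: prime_dvd_mult_iff)
  ultimately show ?thesis
    unfolding padic_val_ge_def by blast
qed

lemma has_padic_val_mult:
  assumes "prime p" "has_padic_val p v x" "has_padic_val p v' y"
  shows "has_padic_val p (v + v') (x * y)"
proof -
  obtain u w where uw: "\<not> int p dvd u" "\<not> int p dvd w" "x = of_int u / of_int w * real p powi v"
    using assms(2) unfolding has_padic_val_def by blast
  obtain u' w' where uw': "\<not> int p dvd u'" "\<not> int p dvd w'"
      "y = of_int u' / of_int w' * real p powi v'"
    using assms(3) unfolding has_padic_val_def by blast
  have "x * y = of_int (u * u') / of_int (w * w') * real p powi (v + v')"
    using uw uw' prime_gt_0_nat[OF assms(1)] by (simp add: power_int_add)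
  moreover have "\<not> int p dvd u * u'" "\<not> int p dvd w * w'"
    using uw uw' assms(1) by (simp_all add: prime_dvd_mult_iff)
  ultimately show ?thesis
    unfolding has_padic_val_def by blast
qed

lemma has_padic_val_one: "prime p \<Longrightarrow> has_padic_val p 0 1"
  unfolding has_padic_val_def by (rule exI[of _ 1], rule exI[of _ 1]) (auto simp: prime_gt_1_nat)

lemma has_padic_val_power:
  assumes "prime p" "has_padic_val p v x"
  shows "has_padic_val p (int n * v) (x ^ n)"
  by (induction n) (auto simp: algebra_simps has_padic_val_one assms(1)
      dest: has_padic_val_mult[OF assms])

lemma has_padic_val_prod:
  assumes "prime p" "finite A" "\<And>i. i \<in> A \<Longrightarrow> has_padic_val p (v i) (f i)"
  shows "has_padic_val p (\<Sum>i\<in>A. v i) (\<Prod>i\<in>A. f i)"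
  using assms(2,3)
  by (induction A rule: finite_induct)
     (auto simp: has_padic_val_one[OF assms(1)] dest: has_padic_val_mult[OF assms(1)])

lemma has_padic_val_add:
  assumes "prime p" "has_padic_val p v x" "padic_val_ge p (v + 1) y"
  shows "has_padic_val p v (x + y)"
proof -
  obtain u w where uw: "\<not> int p dvd u" "\<not> int p dvd w" "x = of_int u / of_int w * real p powi v"
    using assms(2) unfolding has_padic_val_def by blast
  obtain u' w' where uw': "\<not> int p dvd w'" "y = of_int u' / of_int w' * real p powi (v + 1)"
    using assms(3) unfolding padic_val_ge_def by blast
  have "w \<noteq> 0" "w' \<noteq> 0"
    using uw(2) uw'(1) by auto
  then have "x + y = of_int (u * w' + u' * int p * w) / of_int (w * w') * real p powi v"
    using uw(3) uw'(2) prime_gt_0_nat[OF assms(1)] by (simp add: field_simps power_int_add)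
  moreover have "\<not> int p dvd w * w'" "\<not> int p dvd u * w' + u' * int p * w"
    using uw uw' assms(1) by (simp_all add: prime_dvd_mult_iff dvd_add_left_iff)
  ultimately show ?thesis
    unfolding has_padic_val_def by blast
qed

lemma has_padic_val_inverse:
  assumes "prime p" "has_padic_val p v x"
  shows "has_padic_val p (- v) (1 / x)"
proof -
  obtain u w where uw: "\<not> int p dvd u" "\<not> int p dvd w" "x = of_int u / of_int w * real p powi v"
    using assms(2) unfolding has_padic_val_def by blast
  have "u \<noteq> 0"
    using uw(1) by auto
  then have "1 / x = of_int w / of_int u * real p powi (- v)"
    using uw(3) by (simp add: power_int_minus field_simps)
  then show ?thesis
    unfolding has_padic_val_def using uw(1,2) by blast
qed

lemma has_padic_val_of_int:
  assumes "prime p" "c \<noteq> 0"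
  shows "has_padic_val p (int (nu p c)) (of_int c)"
proof -
  have "\<not> is_unit (int p)"
    using prime_gt_1_nat[OF assms(1)] by simp
  then obtain y where y: "c = int p ^ nu p c * y" "\<not> int p dvd y"
    unfolding nu_def using multiplicity_decompose'[OF assms(2)] by metis
  have "real_of_int c = of_int y / of_int 1 * real p powi int (nu p c)"
    by (subst (1) y(1)) (simp add: power_int_of_nat)
  then show ?thesis
    unfolding has_padic_val_def using y(2) \<open>\<not> is_unit (int p)\<close> by blast
qed

lemma padic_val_ge_divide_int:
  assumes "prime p" "a \<noteq> 0"
  shows "padic_val_ge p (- int (nu p a)) (of_int b / of_int a)"
proof -
  have "padic_val_ge p (0 + - int (nu p a)) (of_int b * (1 / of_int a))"
    using assms
    by (intro padic_val_ge_mult padic_val_ge_of_int has_padic_val_imp_ge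
        has_padic_val_inverse has_padic_val_of_int)
  then show ?thesis
    by simp
qed

lemma has_padic_val_divide_int:
  assumes "prime p" "a \<noteq> 0" "\<not> int p dvd b"
  shows "has_padic_val p (- int (nu p a)) (of_int b / of_int a)"
proof -
  have "b \<noteq> 0" "nu p b = 0"
    using assms(3) by (auto simp: nu_def not_dvd_imp_multiplicity_0)
  then have "has_padic_val p (int (nu p b) + - int (nu p a)) (of_int b * (1 / of_int a))"
    using assms(1,2)
    by (intro has_padic_val_mult has_padic_val_inverse has_padic_val_of_int)
  then show ?thesis
    using \<open>nu p b = 0\<close> by simp
qed

lemma has_padic_val_sum_Min:
  assumes p: "prime p" and "finite S" "S \<noteq> {}" "inj_on f S"
    and val: "\<And>e. e \<in> S \<Longrightarrow> has_padic_val p (f e) (T e)"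
  shows "has_padic_val p (Min (f ` S)) (\<Sum>e\<in>S. T e)"
proof -
  have "Min (f ` S) \<in> f ` S"
    using assms(2,3) by simp
  then obtain e0 where e0: "e0 \<in> S" "f e0 = Min (f ` S)"
    by auto
  have "padic_val_ge p (f e0 + 1) (\<Sum>e\<in>S-{e0}. T e)"
  proof (rule padic_val_ge_sum[OF p])
    fix e
    assume e: "e \<in> S - {e0}"
    then have "f e0 < f e"
      using e0 Min_le[of "f ` S" "f e"] inj_onD[OF assms(4), of e e0] assms(2) by fastforce
    then show "padic_val_ge p (f e0 + 1) (T e)"
      using padic_val_ge_mono[OF p has_padic_val_imp_ge[OF val]] e by auto
  qed
  then have "has_padic_val p (f e0) (T e0 + (\<Sum>e\<in>S-{e0}. T e))"
    using has_padic_val_add[OF p val[OF e0(1)]] by blast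
  then show ?thesis
    using e0 assms(2) by (simp add: sum.remove)
qed

lemma psum_has_padic_val:
  fixes a b :: "nat \<Rightarrow> int"
  assumes p: "prime p"
    and nz: "\<forall>n\<in>{1..N}. a n \<noteq> 0"
    and cop: "\<forall>n\<in>{1..N}. \<not> int p dvd gcd (a n) (b n)"
    and uniq: "\<exists>!n. n \<in> {1..N} \<and> nu p (a n) = maxnu p a N"
    and pos: "maxnu p a N \<ge> 1"
  shows "has_padic_val p (- int (maxnu p a N)) (psum a b N)"
proof -
  define M where "M = maxnu p a N"
  obtain n0 where n0: "n0 \<in> {1..N}" "nu p (a n0) = M"
    and n0_unique: "\<And>n. n \<in> {1..N} \<Longrightarrow> nu p (a n) = M \<Longrightarrow> n = n0"
    using uniq unfolding M_def by blast
  have nu_le: "nu p (a n) \<le> M" if "n \<in> {1..N}" for n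
    unfolding M_def maxnu_def by (rule Max_ge) (use that in auto)
  have "int p dvd a n0"
    using multiplicity_dvd'[of 1 "int p" "a n0"] n0 pos unfolding M_def nu_def by simp
  then have "\<not> int p dvd b n0"
    using cop n0(1) by auto
  then have "has_padic_val p (- int M) (of_int (b n0) / of_int (a n0))"
    using has_padic_val_divide_int[OF p] nz n0 by auto
  moreover have "padic_val_ge p (- int M + 1) (\<Sum>n\<in>{1..N}-{n0}. of_int (b n) / of_int (a n))"
  proof (rule padic_val_ge_sum[OF p])
    fix n
    assume n: "n \<in> {1..N} - {n0}"
    then have "nu p (a n) < M"
      using nu_le[of n] n0_unique[of n] by force
    then show "padic_val_ge p (- int M + 1) (of_int (b n) / of_int (a n))"
      using padic_val_ge_mono[OF p padic_val_ge_divide_int[OF p]] nz n by auto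
  qed
  ultimately have "has_padic_val p (- int M)
      (of_int (b n0) / of_int (a n0) + (\<Sum>n\<in>{1..N}-{n0}. of_int (b n) / of_int (a n)))"
    using has_padic_val_add[OF p] by simp
  then show ?thesis
    unfolding M_def psum_def using n0(1) by (simp add: sum.remove)
qed

section \<open>Distinct valuations of the monomials\<close>

lemma finite_exps_deg_le: "finite (exps_deg_le K d)"
proof (rule finite_subset)
  show "exps_deg_le K d \<subseteq> {e. \<forall>i. (i \<in> {1..K} \<longrightarrow> e i \<in> {0..d}) \<and> (i \<notin> {1..K} \<longrightarrow> e i = 0)}"
  proof safe
    fix e i
    assume e: "e \<in> exps_deg_le K d" and i: "i \<in> {1..K}"
    have "e i \<le> (\<Sum>i=1..K. e i)"
      using i by (intro member_le_sum) auto
    then show "e i \<in> {0..d}"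
      using e unfolding exps_deg_le_def by auto
  qed (auto simp: exps_deg_le_def)
  show "finite {e. \<forall>i. (i \<in> {1..K} \<longrightarrow> e i \<in> {0..d}) \<and> (i \<notin> {1..K} \<longrightarrow> e i = (0::nat))}"
    by (rule finite_set_of_finite_funs) auto
qed

lemma top_differing_index:
  fixes e e' :: "nat \<Rightarrow> nat"
  assumes "\<forall>i. i \<notin> {1..K} \<longrightarrow> e i = 0" "\<forall>i. i \<notin> {1..K} \<longrightarrow> e' i = 0" "e \<noteq> e'"
  obtains j where "j \<in> {1..K}" "e j \<noteq> e' j" "\<forall>i\<in>{j<..K}. e i = e' i"
proof -
  define D where "D = {i\<in>{1..K}. e i \<noteq> e' i}"
  have "finite D"
    using finite_atLeastAtMost[of 1 K] unfolding D_def by (rule rev_finite_subset) auto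
  obtain i where "e i \<noteq> e' i"
    using assms(3) by blast
  then have "i \<in> D"
    using assms(1,2)[rule_format, of i] unfolding D_def by (cases "i \<in> {1..K}") auto
  with \<open>finite D\<close> have "Max D \<in> D"
    by (intro Max_in) auto
  moreover have "\<forall>l\<in>{Max D<..K}. e l = e' l"
  proof (rule ballI, rule ccontr)
    fix l
    assume l: "l \<in> {Max D<..K}" "e l \<noteq> e' l"
    then have "l \<in> D"
      using \<open>Max D \<in> D\<close> unfolding D_def by auto
    then show False
      using Max_ge[OF \<open>finite D\<close>, of l] l(1) by simp
  qed
  ultimately show ?thesis
    using that unfolding D_def by blast
qed

lemma weighted_exponent_sum_gap:
  fixes e e' M :: "nat \<Rightarrow> nat"
  assumes j: "j \<in> {1..K}" and lt: "e' j < e j" and eq: "\<forall>i\<in>{j<..K}. e i = e' i"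
    and deg: "(\<Sum>i=1..K. e' i) \<le> d" and mono: "\<forall>i\<in>{1..<j}. M i \<le> M (j-1)"
  shows "int (M j) - int d * int (M (j-1)) \<le>
         (\<Sum>i=1..K. int (e i) * int (M i)) - (\<Sum>i=1..K. int (e' i) * int (M i))"
proof -
  define g where "g i = (int (e i) - int (e' i)) * int (M i)" for i
  have split: "{1..K} = {1..<j} \<union> insert j {j<..K}"
    using j by auto
  have "(\<Sum>i=1..K. g i) = (\<Sum>i\<in>{1..<j}. g i) + (\<Sum>i\<in>insert j {j<..K}. g i)"
    unfolding split by (rule sum.union_disjoint) auto
  moreover have "(\<Sum>i\<in>insert j {j<..K}. g i) = g j"
    using eq unfolding g_def by simp
  moreover have "(\<Sum>i=1..K. g i) =
      (\<Sum>i=1..K. int (e i) * int (M i)) - (\<Sum>i=1..K. int (e' i) * int (M i))"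
    unfolding g_def by (simp add: sum_subtractf left_diff_distrib)
  moreover have "int (M j) \<le> g j"
    unfolding g_def using mult_right_mono[of 1 "int (e j) - int (e' j)" "int (M j)"] lt by simp
  moreover have "- (int d * int (M (j-1))) \<le> (\<Sum>i\<in>{1..<j}. g i)"
  proof -
    have "(\<Sum>i\<in>{1..<j}. e' i) \<le> (\<Sum>i=1..K. e' i)"
      using j by (intro sum_mono2) auto
    then have "(\<Sum>i\<in>{1..<j}. e' i) * M (j-1) \<le> d * M (j-1)"
      using deg by simp
    then have "(\<Sum>i\<in>{1..<j}. int (e' i) * int (M (j-1))) \<le> int d * int (M (j-1))"
      by (simp flip: sum_distrib_right of_nat_sum of_nat_mult)
    moreover have "- (int (e' i) * int (M (j-1))) \<le> g i" if "i \<in> {1..<j}" for i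
    proof -
      have "int (e' i) * int (M i) \<le> int (e' i) * int (M (j-1))"
        using mono that by (simp add: mult_left_mono)
      moreover have "0 \<le> int (e i) * int (M i)"
        by simp
      ultimately show ?thesis
        unfolding g_def left_diff_distrib by linarith
    qed
    then have "(\<Sum>i\<in>{1..<j}. - (int (e' i) * int (M (j-1)))) \<le> (\<Sum>i\<in>{1..<j}. g i)"
      by (rule sum_mono)
    ultimately show ?thesis
      by (simp add: sum_negf)
  qed
  ultimately show ?thesis
    by linarith
qed

lemma mono_of_gaps:
  fixes M :: "nat \<Rightarrow> nat"
  assumes "d > 0" and gap: "\<forall>j\<in>{1..K}. C + d * M (j-1) < M j" and "i \<le> j" "j \<le> K"
  shows "M i \<le> M j"
  using \<open>i \<le> j\<close>
proof (induction j rule: dec_induct)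
  case (step n)
  then have "Suc n \<in> {1..K}"
    using \<open>j \<le> K\<close> by simp
  from gap[rule_format, OF this] have "C + d * M n < M (Suc n)"
    by simp
  moreover have "M n \<le> d * M n"
    using \<open>d > 0\<close> by simp
  ultimately show ?case
    using step.IH by linarith
qed simp

lemma exponent_weights_inj_on:
  fixes M :: "nat \<Rightarrow> nat" and w :: "(nat \<Rightarrow> nat) \<Rightarrow> nat"
  assumes "d > 0"
    and gap: "\<forall>j\<in>{1..K}. C + d * M (j-1) < M j"
    and S: "\<forall>e\<in>S. e \<in> exps_deg_le K d \<and> w e \<le> C"
  shows "inj_on (\<lambda>e. int (w e) - (\<Sum>i=1..K. int (e i) * int (M i))) S"
proof -
  define f where "f e = int (w e) - (\<Sum>i=1..K. int (e i) * int (M i))" for e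
  have less: "f e < f e'"
    if "e \<in> S" "e' \<in> S" "j \<in> {1..K}" "e' j < e j" "\<forall>i\<in>{j<..K}. e i = e' i" for e e' j
  proof -
    have "(\<Sum>i=1..K. e' i) \<le> d"
      using that(2) S by (simp add: exps_deg_le_def)
    moreover have "\<forall>i\<in>{1..<j}. M i \<le> M (j-1)"
      using mono_of_gaps[OF \<open>d > 0\<close> gap, of _ "j-1"] that(3) by auto
    ultimately have "int (M j) - int d * int (M (j-1)) \<le>
        (\<Sum>i=1..K. int (e i) * int (M i)) - (\<Sum>i=1..K. int (e' i) * int (M i))"
      by (rule weighted_exponent_sum_gap[OF that(3-5)])
    moreover have "w e \<le> C"
      using that(1) S by blast
    moreover have "C + d * M (j-1) < M j"
      using that(3) gap by blast
    then have "int C + int d * int (M (j-1)) < int (M j)"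
      using of_nat_less_iff[of "C + d * M (j-1)" "M j"] by simp
    ultimately show ?thesis
      unfolding f_def by linarith
  qed
  have "inj_on f S"
  proof (rule inj_onI, rule ccontr)
    fix e e'
    assume e: "e \<in> S" "e' \<in> S" "f e = f e'" "e \<noteq> e'"
    have "\<forall>i. i \<notin> {1..K} \<longrightarrow> e i = 0" "\<forall>i. i \<notin> {1..K} \<longrightarrow> e' i = 0"
      using e(1,2) S unfolding exps_deg_le_def by blast+
    then obtain j where j: "j \<in> {1..K}" "e j \<noteq> e' j" "\<forall>i\<in>{j<..K}. e i = e' i"
      using top_differing_index e(4) by blast
    show False
    proof (cases "e j < e' j")
      case True
      have "\<forall>i\<in>{j<..K}. e' i = e i"
        using j(3) by simp
      with True show False
        using less[OF e(2,1) j(1)] e(3) by simp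
    next
      case False
      with j(2) have "e' j < e j"
        by simp
      with j(3) show False
        using less[OF e(1,2) j(1)] e(3) by simp
    qed
  qed
  then show ?thesis
    unfolding f_def .
qed

lemma mpoly_eval_nonzero_if_padic_gaps:
  fixes M :: "nat \<Rightarrow> nat" and x :: "nat \<Rightarrow> real"
  assumes p: "prime p" and "d > 0"
    and coeffs: "\<forall>e. c e \<noteq> 0 \<longrightarrow> e \<in> exps_deg_le K d \<and> nu p (c e) \<le> C"
    and "\<exists>e. c e \<noteq> 0"
    and vals: "\<forall>k\<in>{1..K}. has_padic_val p (- int (M k)) (x k)"
    and gap: "\<forall>j\<in>{1..K}. C + d * M (j-1) < M j"
  shows "mpoly_eval c K x \<noteq> 0"
proof -
  define S where "S = {e. c e \<noteq> 0}"
  define f where "f e = int (nu p (c e)) - (\<Sum>i=1..K. int (e i) * int (M i))" for e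
  have "finite S"
    using coeffs finite_exps_deg_le by (auto simp: S_def intro: finite_subset)
  have "S \<noteq> {}"
    using assms(4) unfolding S_def by blast
  have monomial: "has_padic_val p (f e) (of_int (c e) * (\<Prod>i=1..K. x i ^ e i))" if "e \<in> S" for e
  proof -
    have "has_padic_val p (\<Sum>i=1..K. int (e i) * - int (M i)) (\<Prod>i=1..K. x i ^ e i)"
      using vals by (intro has_padic_val_prod has_padic_val_power p) auto
    then have "has_padic_val p (int (nu p (c e)) + (\<Sum>i=1..K. int (e i) * - int (M i)))
        (of_int (c e) * (\<Prod>i=1..K. x i ^ e i))"
      using that unfolding S_def by (intro has_padic_val_mult has_padic_val_of_int p) auto
    then show ?thesis
      unfolding f_def by (simp add: sum_negf)
  qed
  have "\<forall>e\<in>S. e \<in> exps_deg_le K d \<and> nu p (c e) \<le> C"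
    using coeffs unfolding S_def by blast
  then have "inj_on f S"
    unfolding f_def by (rule exponent_weights_inj_on[OF \<open>d > 0\<close> gap])
  with \<open>finite S\<close> \<open>S \<noteq> {}\<close> have "has_padic_val p (Min (f ` S))
      (\<Sum>e\<in>S. of_int (c e) * (\<Prod>i=1..K. x i ^ e i))"
    using monomial by (rule has_padic_val_sum_Min[OF p])
  then show ?thesis
    unfolding mpoly_eval_def S_def using has_padic_val_nonzero[OF p] by blast
qed

section \<open>Choice of the prime\<close>

lemma infinite_ex_not_dvd:
  fixes P :: "nat set" and X :: "int set"
  assumes "infinite P" "finite X" "0 \<notin> X"
  shows "\<exists>p\<in>P. \<forall>x\<in>X. \<not> int p dvd x"
proof -
  obtain p where p: "p \<in> P" "p > Max (insert 0 ((nat \<circ> abs) ` X))"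
    using assms(1) unfolding infinite_nat_iff_unbounded by blast
  have "\<not> int p dvd x" if "x \<in> X" for x
  proof
    assume "int p dvd x"
    then have "int p \<le> \<bar>x\<bar>"
      using dvd_imp_le_int[of x "int p"] that assms(3) by auto
    then have "p \<le> nat \<bar>x\<bar>"
      by (simp add: le_nat_iff)
    moreover have "nat \<bar>x\<bar> \<le> Max (insert 0 ((nat \<circ> abs) ` X))"
      using that assms(2) by auto
    ultimately show False
      using p(2) by linarith
  qed
  with p(1) show ?thesis
    by blast
qed

lemma obtain_prime_with_eventual_gaps:
  fixes PP :: "nat set" and m :: "nat \<Rightarrow> nat \<Rightarrow> nat \<Rightarrow> nat" and c :: "'a \<Rightarrow> int"
  assumes PP: "(\<exists>p. prime p \<and> PP = {p}) \<or> (infinite PP \<and> (\<forall>p\<in>PP. prime p))"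
    and "finite {e. c e \<noteq> 0}"
    and grow: "\<forall>k\<in>{1..K}. \<forall>p\<in>PP. eventually (\<lambda>N. d * m p (k-1) N < m p k N) sequentially"
    and single: "\<forall>p. PP = {p} \<longrightarrow> (\<forall>k\<in>{1..K}.
      filterlim (\<lambda>N. real (m p k N) - real d * real (m p (k-1) N)) at_top sequentially)"
  obtains p C where "prime p" "p \<in> PP" "\<forall>e. c e \<noteq> 0 \<longrightarrow> nu p (c e) \<le> C"
    "\<forall>k\<in>{1..K}. eventually (\<lambda>N. C + d * m p (k-1) N < m p k N) sequentially"
proof (cases "\<exists>p. prime p \<and> PP = {p}")
  case True
  then obtain p where p: "prime p" "PP = {p}"
    by blast
  define C where "C = Max ((\<lambda>e. nu p (c e)) ` {e. c e \<noteq> 0})"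
  have "\<forall>e. c e \<noteq> 0 \<longrightarrow> nu p (c e) \<le> C"
    unfolding C_def using assms(2) by auto
  moreover have "eventually (\<lambda>N. C + d * m p (k-1) N < m p k N) sequentially"
    if "k \<in> {1..K}" for k
  proof -
    have "eventually (\<lambda>N. real C < real (m p k N) - real d * real (m p (k-1) N)) sequentially"
      using single p(2) that unfolding filterlim_at_top_dense by blast
    then show ?thesis
      by (rule eventually_mono) (simp flip: of_nat_mult of_nat_add)
  qed
  ultimately show ?thesis
    using that p by auto
next
  case False
  then have "infinite PP" "\<forall>p\<in>PP. prime p"
    using PP by auto
  moreover have "finite (c ` {e. c e \<noteq> 0})" "0 \<notin> c ` {e. c e \<noteq> 0}"
    using assms(2) by auto
  ultimately obtain p where p: "p \<in> PP" "\<forall>x\<in>c ` {e. c e \<noteq> 0}. \<not> int p dvd x"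
    using infinite_ex_not_dvd by blast
  then have "\<forall>e. c e \<noteq> 0 \<longrightarrow> nu p (c e) \<le> 0"
    unfolding nu_def by (auto simp: not_dvd_imp_multiplicity_0)
  moreover have "\<forall>k\<in>{1..K}. eventually (\<lambda>N. 0 + d * m p (k-1) N < m p k N) sequentially"
    using grow p(1) by simp
  ultimately show ?thesis
    using that p(1) \<open>\<forall>p\<in>PP. prime p\<close> by blast
qed

theorem lemma9:
  fixes d K :: nat
    and PP :: "nat set"
    and a b :: "nat \<Rightarrow> nat \<Rightarrow> int"
    and c :: "(nat \<Rightarrow> nat) \<Rightarrow> int"
  assumes "d > 0" and "K > 0"
    and PP: "(\<exists>p. prime p \<and> PP = {p}) \<or> (infinite PP \<and> (\<forall>p\<in>PP. prime p))"
    and nz: "\<forall>k\<in>{1..K}. \<forall>n\<ge>1. a k n \<noteq> 0 \<and> b k n \<noteq> 0"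
    and cop: "\<forall>p\<in>PP. \<forall>k\<in>{1..K}. \<forall>n\<ge>1. \<not> (int p dvd gcd (a k n) (b k n))"
    and conv: "\<forall>k\<in>{1..K}. convergent (\<lambda>N. psum (a k) (b k) N)"
    and a0: "\<forall>n. a 0 n = 1"
    and uniq: "\<forall>k\<in>{1..K}. \<forall>p\<in>PP. \<forall>N\<ge>1.
                 \<exists>!n. n \<in> {1..N} \<and> nu p (a k n) = maxnu p (a k) N"
    and grow: "\<forall>k\<in>{1..K}. \<forall>p\<in>PP.
                 eventually (\<lambda>N. maxnu p (a k) N > d * maxnu p (a (k-1)) N) sequentially"
    and single: "\<forall>p. PP = {p} \<longrightarrow> (\<forall>k\<in>{1..K}.
                 filterlim (\<lambda>N. real (maxnu p (a k) N) - real d * real (maxnu p (a (k-1)) N))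
                   at_top sequentially)"
    and cdeg: "\<forall>e. c e \<noteq> 0 \<longrightarrow> e \<in> exps_deg_le K d"
    and cnz: "\<exists>e. c e \<noteq> 0"
  shows "eventually (\<lambda>N. mpoly_eval c K (\<lambda>k. psum (a k) (b k) N) \<noteq> 0) sequentially"
proof -
  have "finite {e. c e \<noteq> 0}"
    using cdeg by (intro finite_subset[OF _ finite_exps_deg_le]) auto
  then obtain p C where p: "prime p" "p \<in> PP" and coeffs: "\<forall>e. c e \<noteq> 0 \<longrightarrow> nu p (c e) \<le> C"
    and gaps: "\<forall>k\<in>{1..K}. eventually (\<lambda>N. C + d * maxnu p (a (k-1)) N < maxnu p (a k) N) sequentially"
    using obtain_prime_with_eventual_gaps[where m = "\<lambda>p k N. maxnu p (a k) N", OF PP _ grow single]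
    by blast
  have "eventually (\<lambda>N. N \<ge> 1 \<and>
      (\<forall>k\<in>{1..K}. C + d * maxnu p (a (k-1)) N < maxnu p (a k) N)) sequentially"
    using gaps by (intro eventually_conj eventually_ball_finite) (auto simp: eventually_ge_at_top)
  then show ?thesis
  proof (rule eventually_mono)
    fix N
    assume N: "N \<ge> 1 \<and> (\<forall>k\<in>{1..K}. C + d * maxnu p (a (k-1)) N < maxnu p (a k) N)"
    have "\<forall>k\<in>{1..K}. has_padic_val p (- int (maxnu p (a k) N)) (psum (a k) (b k) N)"
    proof
      fix k
      assume k: "k \<in> {1..K}"
      then have "maxnu p (a k) N \<ge> 1"
        using N by fastforce
      then show "has_padic_val p (- int (maxnu p (a k) N)) (psum (a k) (b k) N)"
        using nz cop uniq k p N by (intro psum_has_padic_val) auto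
    qed
    then show "mpoly_eval c K (\<lambda>k. psum (a k) (b k) N) \<noteq> 0"
      using cdeg coeffs cnz N
      by (intro mpoly_eval_nonzero_if_padic_gaps[OF p(1) \<open>d > 0\<close>, where M = "\<lambda>k. maxnu p (a k) N"])
        auto
  qed
qed

end
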